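(* For every integer $d\ge3$ and all $p_1,\dots,p_d\in(0,1)$, the first rencontre-time $J^d$ (see context) satisfies $E(J^d)=\infty$.
   Context: Let $d\ge2$ be an integer and $p_1,\dots,p_d\in(0,1)$. Let $\{X^j_k\}_{k\ge1}$, $j=1,\dots,d$, be independent sequences, the $j$-th consisting of i.i.d. Bernoulli random variables with success parameter $p_j$ (all $X^j_k$ mutually independent). Set $S^j(n)=\sum_{i=1}^n X^j_i$. The first rencontre-time is $J^d=\inf\{n\ge1: S^1(n)=S^2(n)=\dots=S^d(n)\}$ with $\inf\emptyset=\infty$. *)

theory Defs
  imports "HOL-Probability.Probability"
begin

text \<open>Random variables X j k (sequence index j, time index k) are boolean-valued;
  success means X j k = True. Sequences are indexed by j = 0..d-1, times by k = 1,2,...\<close>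

definition partial_count :: "(nat \<Rightarrow> nat \<Rightarrow> 'a \<Rightarrow> bool) \<Rightarrow> nat \<Rightarrow> nat \<Rightarrow> 'a \<Rightarrow> nat" where
  "partial_count X j n \<omega> = (\<Sum>i = 1..n. if X j i \<omega> then 1 else 0)"

definition rencontre_time :: "nat \<Rightarrow> (nat \<Rightarrow> nat \<Rightarrow> 'a \<Rightarrow> bool) \<Rightarrow> 'a \<Rightarrow> enat" where
  "rencontre_time d X \<omega> =
     (if \<exists>n\<ge>1. \<forall>j<d. \<forall>l<d. partial_count X j n \<omega> = partial_count X l n \<omega>
      then enat (LEAST n. n \<ge> 1 \<and> (\<forall>j<d. \<forall>l<d. partial_count X j n \<omega> = partial_count X l n \<omega>))
      else \<infinity>)"

end

(*
  Only the first two sequences matter: J^d can only occur at a time n with S^1(n) = S^2(n),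
  i.e. when the walk W(n) = S^1(n) - S^2(n) is at 0. Orient W so that its drift |p_1 - p_2|
  is nonnegative, let tau be its first zero and F the event that its first step is +1, of
  probability c > 0. The increments of 1_F W(min n tau) are 1_F 1_{tau > n} times an
  independent step of nonnegative mean, so its expectation never drops below its value c
  at n = 1; since it is at most n on {tau > n} and 0 elsewhere, P(J^d > n) >= P(tau > n) >= c/n.
  Hence E J^d >= sum_n P(J^d > n) diverges like the harmonic series.
*)
theory Submission
  imports Defs
begin

definition depends_only_on :: "('i \<Rightarrow> 'a \<Rightarrow> 'b) \<Rightarrow> 'i set \<Rightarrow> ('a \<Rightarrow> 'c) \<Rightarrow> bool" where
  "depends_only_on Y K g \<longleftrightarrow> (\<forall>\<omega> \<omega>'. (\<forall>i\<in>K. Y i \<omega> = Y i \<omega>') \<longrightarrow> g \<omega> = g \<omega>')"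

lemma depends_only_on_mono: "depends_only_on Y K g \<Longrightarrow> K \<subseteq> K' \<Longrightarrow> depends_only_on Y K' g"
  unfolding depends_only_on_def by blast

lemma depends_only_on_coordinate: "i \<in> K \<Longrightarrow> depends_only_on Y K (Y i)"
  unfolding depends_only_on_def by blast

lemma depends_only_on_combine:
  assumes "depends_only_on Y K f" "depends_only_on Y K g"
  shows "depends_only_on Y K (\<lambda>\<omega>. h (f \<omega>) (g \<omega>))"
  unfolding depends_only_on_def
proof (intro allI impI)
  fix \<omega> \<omega>' assume "\<forall>i\<in>K. Y i \<omega> = Y i \<omega>'"
  then have "f \<omega> = f \<omega>'" "g \<omega> = g \<omega>'" using assms unfolding depends_only_on_def by blast+
  then show "h (f \<omega>) (g \<omega>) = h (f \<omega>') (g \<omega>')" by simp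
qed

lemma depends_only_on_comp:
  "depends_only_on Y K f \<Longrightarrow> depends_only_on Y K (\<lambda>\<omega>. h (f \<omega>))"
  using depends_only_on_combine[where h="\<lambda>a _. h a"] by blast

lemma depends_only_on_sum:
  assumes "\<And>a. a \<in> A \<Longrightarrow> depends_only_on Y K (f a)"
  shows "depends_only_on Y K (\<lambda>\<omega>. \<Sum>a\<in>A. f a \<omega>)"
  unfolding depends_only_on_def
proof (intro allI impI)
  fix \<omega> \<omega>' assume "\<forall>i\<in>K. Y i \<omega> = Y i \<omega>'"
  then have "f a \<omega> = f a \<omega>'" if "a \<in> A" for a
    using assms[OF that] unfolding depends_only_on_def by blast
  then show "(\<Sum>a\<in>A. f a \<omega>) = (\<Sum>a\<in>A. f a \<omega>')" by (rule sum.cong[OF refl])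
qed

lemma depends_only_on_factor:
  assumes "depends_only_on Y K g"
  obtains h where "range h \<subseteq> range g" and "g = h \<circ> (\<lambda>\<omega>. restrict (\<lambda>i. Y i \<omega>) K)"
proof
  let ?R = "\<lambda>\<omega>. restrict (\<lambda>i. Y i \<omega>) K"
  show "range (\<lambda>f. g (SOME \<omega>. ?R \<omega> = f)) \<subseteq> range g" by auto
  show "g = (\<lambda>f. g (SOME \<omega>. ?R \<omega> = f)) \<circ> ?R"
  proof
    fix \<omega>
    have same: "?R (SOME \<omega>'. ?R \<omega>' = ?R \<omega>) = ?R \<omega>" by (rule someI) (rule refl)
    have "Y i \<omega> = Y i (SOME \<omega>'. ?R \<omega>' = ?R \<omega>)" if "i \<in> K" for i
      using fun_cong[OF same, of i] that by simp
    then show "g \<omega> = ((\<lambda>f. g (SOME \<omega>. ?R \<omega> = f)) \<circ> ?R) \<omega>"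
      using assms unfolding depends_only_on_def by simp
  qed
qed

lemma suminf_indicator_le_enat:
  fixes T :: enat
  assumes "\<And>t. x \<in> A (Suc t) \<Longrightarrow> enat (Suc t) < T"
  shows "(\<Sum>t. indicator (A (Suc t)) x :: ennreal) \<le> ennreal_of_enat T"
proof (cases T)
  case (enat k)
  have "(\<Sum>t<n. indicator (A (Suc t)) x :: ennreal) \<le> of_nat k" for n
  proof -
    have "(\<Sum>t<n. indicator (A (Suc t)) x :: ennreal) = of_nat (card ({..<n} \<inter> {t. x \<in> A (Suc t)}))"
      by (simp add: indicator_def sum.If_cases)
    also have "card ({..<n} \<inter> {t. x \<in> A (Suc t)}) \<le> card {..<k}"
    proof (intro card_mono subsetI)
      fix t assume "t \<in> {..<n} \<inter> {t. x \<in> A (Suc t)}"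
      then have "enat (Suc t) < enat k" using assms[of t] enat by simp
      then show "t \<in> {..<k}" by simp
    qed simp
    finally show ?thesis by (simp add: of_nat_mono)
  qed
  then show ?thesis using enat by (simp add: suminf_eq_SUP SUP_least)
qed simp

lemma suminf_ennreal_harmonic:
  assumes "0 < c"
  shows "(\<Sum>t. ennreal (c / Suc t)) = \<infinity>"
proof -
  have "(\<Sum>t. ennreal (inverse (Suc t))) = top"
    using not_summable_harmonic[where 'a=real] summable_Suc_iff[where f="\<lambda>n. inverse (real n)"]
    by (intro summable_iff_suminf_neq_top) auto
  then have "(\<Sum>t. ennreal c * ennreal (inverse (Suc t))) = \<infinity>"
    using assms by (simp add: ennreal_mult_top)
  then show ?thesis by (simp add: ennreal_mult'' divide_inverse)
qed

context prob_space
begin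

lemma measurable_restrict_countable:
  fixes Y :: "'i \<Rightarrow> 'a \<Rightarrow> 'b::countable"
  assumes "indep_vars (\<lambda>_. count_space UNIV) Y I" "finite K" "K \<subseteq> I"
  shows "(\<lambda>\<omega>. restrict (\<lambda>i. Y i \<omega>) K) \<in> measurable M (count_space (PiE K (\<lambda>_. UNIV)))"
proof -
  have "(\<lambda>\<omega>. restrict (\<lambda>i. Y i \<omega>) K) \<in> measurable M (PiM K (\<lambda>_. count_space UNIV))"
    using assms(1,3) unfolding indep_vars_def by (auto intro!: measurable_restrict)
  then show ?thesis
    using count_space_PiM_finite[OF assms(2), of "\<lambda>_. UNIV :: 'b set"] by simp
qed

lemma measurable_depends_only_on:
  fixes Y :: "'i \<Rightarrow> 'a \<Rightarrow> 'b::countable"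
  assumes "indep_vars (\<lambda>_. count_space UNIV) Y I" "finite K" "K \<subseteq> I"
    and "depends_only_on Y K g" "range g \<subseteq> space N"
  shows "g \<in> measurable M N"
proof -
  obtain h where "range h \<subseteq> range g" and g: "g = h \<circ> (\<lambda>\<omega>. restrict (\<lambda>i. Y i \<omega>) K)"
    using depends_only_on_factor[OF assms(4)] .
  then have "h \<in> measurable (count_space (PiE K (\<lambda>_. UNIV))) N"
    using assms(5) by auto
  then show ?thesis
    unfolding g by (rule measurable_comp[OF measurable_restrict_countable[OF assms(1-3)]])
qed

lemma indep_var_depends_only_on:
  fixes Y :: "'i \<Rightarrow> 'a \<Rightarrow> 'b::countable"
  assumes Y: "indep_vars (\<lambda>_. count_space UNIV) Y I"
    and K: "finite K1" "K1 \<subseteq> I" "finite K2" "K2 \<subseteq> I" "K1 \<inter> K2 = {}"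
    and g: "depends_only_on Y K1 g1" "range g1 \<subseteq> space N1"
      "depends_only_on Y K2 g2" "range g2 \<subseteq> space N2"
  shows "indep_var N1 g1 N2 g2"
proof -
  obtain h1 where "range h1 \<subseteq> range g1" and h1: "g1 = h1 \<circ> (\<lambda>\<omega>. restrict (\<lambda>i. Y i \<omega>) K1)"
    using depends_only_on_factor[OF g(1)] .
  then have h1_meas: "h1 \<in> measurable (count_space (PiE K1 (\<lambda>_. UNIV))) N1"
    using g(2) by auto
  obtain h2 where "range h2 \<subseteq> range g2" and h2: "g2 = h2 \<circ> (\<lambda>\<omega>. restrict (\<lambda>i. Y i \<omega>) K2)"
    using depends_only_on_factor[OF g(3)] .
  then have h2_meas: "h2 \<in> measurable (count_space (PiE K2 (\<lambda>_. UNIV))) N2"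
    using g(4) by auto
  have "indep_var (count_space (PiE K1 (\<lambda>_. UNIV))) (\<lambda>\<omega>. restrict (\<lambda>i. Y i \<omega>) K1)
      (count_space (PiE K2 (\<lambda>_. UNIV))) (\<lambda>\<omega>. restrict (\<lambda>i. Y i \<omega>) K2)"
    using indep_var_restrict[OF Y K(5,2,4)] count_space_PiM_finite[OF K(1), of "\<lambda>_. UNIV :: 'b set"]
      count_space_PiM_finite[OF K(3), of "\<lambda>_. UNIV :: 'b set"]
    by simp
  then have "indep_var N1 (h1 \<circ> (\<lambda>\<omega>. restrict (\<lambda>i. Y i \<omega>) K1)) N2 (h2 \<circ> (\<lambda>\<omega>. restrict (\<lambda>i. Y i \<omega>) K2))"
    using h1_meas h2_meas by (rule indep_var_compose)
  then show ?thesis unfolding h1 h2 .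
qed

lemma integrable_depends_only_on:
  fixes Y :: "'i \<Rightarrow> 'a \<Rightarrow> 'b::countable" and g :: "'a \<Rightarrow> real"
  assumes "indep_vars (\<lambda>_. count_space UNIV) Y I" "finite K" "K \<subseteq> I"
    and "depends_only_on Y K g" "\<And>\<omega>. \<bar>g \<omega>\<bar> \<le> B"
  shows "integrable M g"
  using assms by (intro integrable_const_bound[where B=B] measurable_depends_only_on) auto

lemma integral_mult_depends_only_on:
  fixes Y :: "'i \<Rightarrow> 'a \<Rightarrow> 'b::countable" and f g :: "'a \<Rightarrow> real"
  assumes Y: "indep_vars (\<lambda>_. count_space UNIV) Y I"
    and KL: "finite K" "K \<subseteq> I" "finite L" "L \<subseteq> I" "K \<inter> L = {}"
    and fg: "depends_only_on Y K f" "depends_only_on Y L g"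
    and bounded: "\<And>\<omega>. \<bar>f \<omega>\<bar> \<le> B" "\<And>\<omega>. \<bar>g \<omega>\<bar> \<le> C"
  shows "(\<integral>\<omega>. f \<omega> * g \<omega> \<partial>M) = (\<integral>\<omega>. f \<omega> \<partial>M) * (\<integral>\<omega>. g \<omega> \<partial>M)"
proof (rule indep_var_lebesgue_integral)
  show "indep_var borel f borel g"
    using indep_var_depends_only_on[OF Y KL fg(1) _ fg(2)] by simp
  show "integrable M f" by (rule integrable_depends_only_on[OF Y KL(1,2) fg(1) bounded(1)])
  show "integrable M g" by (rule integrable_depends_only_on[OF Y KL(3,4) fg(2) bounded(2)])
qed

lemma integral_of_bool_eq_prob: "(\<integral>\<omega>. of_bool (P \<omega>) \<partial>M) = prob {\<omega> \<in> space M. P \<omega>}"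
proof -
  have "(\<lambda>\<omega>. of_bool (P \<omega>) :: real) = indicator {\<omega>. P \<omega>}"
    by (auto simp: indicator_def)
  then show ?thesis by (simp add: Int_def conj_commute)
qed

lemma nn_integral_eq_infinity_if_harmonic_tail:
  fixes T :: "'a \<Rightarrow> enat"
  assumes "0 < c" and A_events: "\<And>t. A t \<in> events"
    and A_prob: "\<And>t. 1 \<le> t \<Longrightarrow> c / real t \<le> prob (A t)"
    and A_sub: "\<And>t \<omega>. 1 \<le> t \<Longrightarrow> \<omega> \<in> A t \<Longrightarrow> enat t < T \<omega>"
  shows "(\<integral>\<^sup>+ \<omega>. ennreal_of_enat (T \<omega>) \<partial>M) = \<infinity>"
proof -
  have "\<infinity> = (\<Sum>t. ennreal (c / Suc t))"
    using suminf_ennreal_harmonic[OF \<open>0 < c\<close>] by simp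
  also have "\<dots> \<le> (\<Sum>t. emeasure M (A (Suc t)))"
  proof -
    have "c / Suc t \<le> prob (A (Suc t))" for t using A_prob[of "Suc t"] by simp
    then show ?thesis by (intro suminf_le) (auto simp: emeasure_eq_measure)
  qed
  also have "\<dots> = (\<integral>\<^sup>+ \<omega>. (\<Sum>t. indicator (A (Suc t)) \<omega>) \<partial>M)"
    using A_events by (simp add: nn_integral_suminf)
  also have "\<dots> \<le> (\<integral>\<^sup>+ \<omega>. ennreal_of_enat (T \<omega>) \<partial>M)"
    using A_sub by (intro nn_integral_mono suminf_indicator_le_enat) simp
  finally show ?thesis by (simp add: top_unique)
qed

end

locale bernoulli_pair = prob_space M for M :: "'a measure" +
  fixes X :: "nat \<Rightarrow> nat \<Rightarrow> 'a \<Rightarrow> bool" and p :: "nat \<Rightarrow> real"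
  assumes indep: "indep_vars (\<lambda>_. count_space UNIV) (\<lambda>(j, k). X j k) ({..<2} \<times> {1..})"
    and p_strict: "\<And>j. j < 2 \<Longrightarrow> 0 < p j \<and> p j < 1"
    and prob_X: "\<And>j k. j < 2 \<Longrightarrow> 1 \<le> k \<Longrightarrow> prob {\<omega> \<in> space M. X j k \<omega>} = p j"
begin

definition drift_sign :: real where
  "drift_sign = (if p 1 \<le> p 0 then 1 else -1)"

definition step :: "nat \<Rightarrow> 'a \<Rightarrow> real" where
  "step k \<omega> = drift_sign * (of_bool (X 0 k \<omega>) - of_bool (X 1 k \<omega>))"

definition walk :: "nat \<Rightarrow> 'a \<Rightarrow> real" where
  "walk n \<omega> = (\<Sum>k = 1..n. step k \<omega>)"

definition avoids_zero :: "nat \<Rightarrow> 'a \<Rightarrow> bool" where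
  "avoids_zero n \<omega> \<longleftrightarrow> (\<forall>k\<in>{1..n}. walk k \<omega> \<noteq> 0)"

text \<open>stopped_walk n equals walk (min n \<tau>), \<tau> the first zero of the walk.\<close>
definition stopped_walk :: "nat \<Rightarrow> 'a \<Rightarrow> real" where
  "stopped_walk n \<omega> = walk n \<omega> * of_bool (avoids_zero n \<omega>)"

lemma real_partial_count: "real (partial_count X j n \<omega>) = (\<Sum>k = 1..n. of_bool (X j k \<omega>))"
  unfolding partial_count_def of_nat_sum by (intro sum.cong) auto

lemma walk_eq_0_iff: "walk n \<omega> = 0 \<longleftrightarrow> partial_count X 0 n \<omega> = partial_count X 1 n \<omega>"
proof -
  have "walk n \<omega> = drift_sign * ((\<Sum>k = 1..n. of_bool (X 0 k \<omega>)) - (\<Sum>k = 1..n. of_bool (X 1 k \<omega>)))"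
    by (simp only: walk_def step_def sum_subtractf[symmetric] sum_distrib_left)
  also have "\<dots> = drift_sign * (real (partial_count X 0 n \<omega>) - real (partial_count X 1 n \<omega>))"
    by (simp only: real_partial_count)
  finally have "walk n \<omega> = \<dots>" .
  moreover have "drift_sign \<noteq> 0" by (simp add: drift_sign_def)
  ultimately show ?thesis by simp
qed

lemma walk_Suc: "walk (Suc n) \<omega> = walk n \<omega> + step (Suc n) \<omega>"
  by (simp add: walk_def)

lemma avoids_zero_Suc: "avoids_zero (Suc n) \<omega> \<longleftrightarrow> avoids_zero n \<omega> \<and> walk (Suc n) \<omega> \<noteq> 0"
  by (auto simp: avoids_zero_def atLeastAtMostSuc_conv)

lemma stopped_walk_Suc:
  "stopped_walk (Suc n) \<omega> = stopped_walk n \<omega> + of_bool (avoids_zero n \<omega>) * step (Suc n) \<omega>"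
  by (cases "walk (Suc n) \<omega> = 0") (auto simp: stopped_walk_def avoids_zero_Suc walk_Suc)

lemma abs_step_le: "\<bar>step k \<omega>\<bar> \<le> 1"
  by (simp add: step_def drift_sign_def)

lemma abs_walk_le: "\<bar>walk n \<omega>\<bar> \<le> n"
proof -
  have "\<bar>walk n \<omega>\<bar> \<le> (\<Sum>k = 1..n. \<bar>step k \<omega>\<bar>)" unfolding walk_def by (rule sum_abs)
  also have "\<dots> \<le> (\<Sum>k = 1..n. 1)" by (intro sum_mono abs_step_le)
  finally show ?thesis by simp
qed

abbreviation determined_by :: "nat \<Rightarrow> ('a \<Rightarrow> 'b) \<Rightarrow> bool" where
  "determined_by n g \<equiv> depends_only_on (\<lambda>(j, k). X j k) ({..<2} \<times> {1..n}) g"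

lemma X_depends: "j < 2 \<Longrightarrow> k \<in> K \<Longrightarrow> depends_only_on (\<lambda>(j, k). X j k) ({..<2} \<times> K) (X j k)"
  using depends_only_on_coordinate[of "(j, k)" "{..<2} \<times> K" "\<lambda>(j, k). X j k"] by simp

lemma step_depends: "depends_only_on (\<lambda>(j, k). X j k) ({..<2} \<times> {k}) (step k)"
  unfolding step_def
  by (rule depends_only_on_combine[OF X_depends X_depends,
        where h="\<lambda>a b. drift_sign * (of_bool a - of_bool b)"]) simp_all

lemma step_determined: "k \<in> {1..n} \<Longrightarrow> determined_by n (step k)"
  by (intro depends_only_on_mono[OF step_depends]) auto

lemma walk_determined: "determined_by n (walk n)"
  unfolding walk_def by (rule depends_only_on_sum) (rule step_determined)

lemma avoids_zero_determined: "determined_by n (avoids_zero n)"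
  unfolding depends_only_on_def
proof (intro allI impI)
  fix \<omega> \<omega>' assume agree: "\<forall>i\<in>{..<2} \<times> {1..n}. (\<lambda>(j, k). X j k) i \<omega> = (\<lambda>(j, k). X j k) i \<omega>'"
  have "walk k \<omega> = walk k \<omega>'" if "k \<in> {1..n}" for k
  proof -
    have "determined_by n (walk k)"
      using that by (intro depends_only_on_mono[OF walk_determined]) auto
    then show ?thesis using agree unfolding depends_only_on_def by blast
  qed
  then show "avoids_zero n \<omega> = avoids_zero n \<omega>'" by (simp add: avoids_zero_def)
qed

lemma integrable_bounded_determined:
  fixes g :: "'a \<Rightarrow> real"
  assumes "determined_by n g" "\<And>\<omega>. \<bar>g \<omega>\<bar> \<le> B"
  shows "integrable M g"
  by (rule integrable_depends_only_on[OF indep _ _ assms]) auto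

lemma avoids_zero_event: "{\<omega> \<in> space M. avoids_zero n \<omega>} \<in> events"
proof -
  have "avoids_zero n \<in> measurable M (count_space UNIV)"
    by (rule measurable_depends_only_on[OF indep _ _ avoids_zero_determined]) auto
  then show ?thesis by (simp add: pred_def)
qed

lemma integrable_X:
  assumes "j < 2" "1 \<le> k"
  shows "integrable M (\<lambda>\<omega>. of_bool (X j k \<omega>) :: real)"
proof (rule integrable_bounded_determined[where n=k and B=1])
  show "determined_by k (\<lambda>\<omega>. of_bool (X j k \<omega>) :: real)"
    by (rule depends_only_on_comp[OF X_depends]) (use assms in auto)
qed simp

lemma expectation_X_eq:
  assumes "j < 2" "1 \<le> k"
  shows "(\<integral>\<omega>. of_bool (X j k \<omega> = b) \<partial>M) = (if b then p j else 1 - p j)"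
proof -
  have "(\<integral>\<omega>. of_bool (X j k \<omega>) \<partial>M) = p j"
    using assms by (simp add: integral_of_bool_eq_prob prob_X)
  moreover have "(\<lambda>\<omega>. of_bool (X j k \<omega> = b)) = (\<lambda>\<omega>. if b then of_bool (X j k \<omega>) else 1 - of_bool (X j k \<omega>) :: real)"
    by auto
  ultimately show ?thesis using integrable_X[OF assms] by (simp add: prob_space)
qed

lemma expectation_step:
  assumes "1 \<le> k"
  shows "(\<integral>\<omega>. step k \<omega> \<partial>M) = \<bar>p 0 - p 1\<bar>"
proof -
  have "(\<integral>\<omega>. step k \<omega> \<partial>M)
      = drift_sign * ((\<integral>\<omega>. of_bool (X 0 k \<omega>) \<partial>M) - (\<integral>\<omega>. of_bool (X 1 k \<omega>) \<partial>M))"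
    unfolding step_def using integrable_X[of 0 k] integrable_X[of 1 k] assms by simp
  also have "\<dots> = drift_sign * (p 0 - p 1)"
    using expectation_X_eq[of 0 k True] expectation_X_eq[of 1 k True] assms by simp
  finally show ?thesis by (simp add: drift_sign_def)
qed

definition first_step_up :: "'a \<Rightarrow> real" where
  "first_step_up \<omega> = of_bool (step 1 \<omega> = 1)"

lemma expectation_first_step_up_pos: "0 < (\<integral>\<omega>. first_step_up \<omega> \<partial>M)"
proof -
  define b where "b = (p 1 \<le> p 0)"
  have "first_step_up \<omega> = of_bool (X 0 1 \<omega> = b) * of_bool (X 1 1 \<omega> = (\<not> b))" for \<omega>
    by (auto simp: first_step_up_def step_def drift_sign_def b_def)
  then have "(\<integral>\<omega>. first_step_up \<omega> \<partial>M) = (\<integral>\<omega>. of_bool (X 0 1 \<omega> = b) * of_bool (X 1 1 \<omega> = (\<not> b)) \<partial>M)"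
    by simp
  also have "\<dots> = (\<integral>\<omega>. of_bool (X 0 1 \<omega> = b) \<partial>M) * (\<integral>\<omega>. of_bool (X 1 1 \<omega> = (\<not> b)) \<partial>M)"
    by (rule integral_mult_depends_only_on[OF indep, where K="{(0, 1)}" and L="{(1, 1)}" and B=1 and C=1])
      (auto simp: depends_only_on_def)
  also have "\<dots> > 0"
    using p_strict[of 0] p_strict[of 1] by (simp add: expectation_X_eq)
  finally show ?thesis .
qed

lemma first_step_up_determined: "1 \<le> n \<Longrightarrow> determined_by n first_step_up"
  unfolding first_step_up_def by (rule depends_only_on_comp[OF step_determined]) simp

lemma stopped_walk_determined: "determined_by n (stopped_walk n)"
  unfolding stopped_walk_def
  by (rule depends_only_on_combine[OF walk_determined avoids_zero_determined])

lemma integrable_first_step_up_stopped_walk: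
  "integrable M (\<lambda>\<omega>. first_step_up \<omega> * stopped_walk n \<omega>)"
proof (cases "n = 0")
  case True
  then show ?thesis by (simp add: stopped_walk_def walk_def)
next
  case False
  have "determined_by n (\<lambda>\<omega>. first_step_up \<omega> * stopped_walk n \<omega>)"
    by (rule depends_only_on_combine[OF first_step_up_determined stopped_walk_determined])
      (use False in simp)
  then show ?thesis
  proof (rule integrable_bounded_determined[where B=n])
    show "\<bar>first_step_up \<omega> * stopped_walk n \<omega>\<bar> \<le> n" for \<omega>
      using abs_walk_le[of n \<omega>] by (simp add: first_step_up_def stopped_walk_def)
  qed
qed

definition alive :: "nat \<Rightarrow> 'a \<Rightarrow> real" where
  "alive n \<omega> = first_step_up \<omega> * of_bool (avoids_zero n \<omega>)"

lemma alive_determined: "1 \<le> n \<Longrightarrow> determined_by n (alive n)"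
  unfolding alive_def
  by (rule depends_only_on_combine[OF first_step_up_determined avoids_zero_determined])

lemma abs_alive_le: "\<bar>alive n \<omega>\<bar> \<le> 1"
  by (simp add: alive_def first_step_up_def)

lemma integrable_alive_step:
  assumes "1 \<le> n"
  shows "integrable M (\<lambda>\<omega>. alive n \<omega> * step (Suc n) \<omega>)"
proof (rule integrable_bounded_determined[where n="Suc n" and B=1])
  have "determined_by (Suc n) (alive n)"
    by (rule depends_only_on_mono[OF alive_determined[OF assms]]) auto
  then show "determined_by (Suc n) (\<lambda>\<omega>. alive n \<omega> * step (Suc n) \<omega>)"
    by (rule depends_only_on_combine[OF _ step_determined]) simp
  show "\<bar>alive n \<omega> * step (Suc n) \<omega>\<bar> \<le> 1" for \<omega>
    using abs_alive_le[of n \<omega>] abs_step_le[of "Suc n" \<omega>] by (simp add: abs_mult mult_le_one)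
qed

lemma expectation_alive_step_nonneg:
  assumes "1 \<le> n"
  shows "0 \<le> (\<integral>\<omega>. alive n \<omega> * step (Suc n) \<omega> \<partial>M)"
proof -
  have "(\<integral>\<omega>. alive n \<omega> * step (Suc n) \<omega> \<partial>M) = (\<integral>\<omega>. alive n \<omega> \<partial>M) * (\<integral>\<omega>. step (Suc n) \<omega> \<partial>M)"
    by (rule integral_mult_depends_only_on[OF indep _ _ _ _ _ alive_determined[OF assms] step_depends
          abs_alive_le abs_step_le]) auto
  moreover have "0 \<le> (\<integral>\<omega>. alive n \<omega> \<partial>M)"
    by (intro integral_nonneg_AE AE_I2) (simp add: alive_def first_step_up_def)
  ultimately show ?thesis using expectation_step[of "Suc n"] by simp
qed

lemma expectation_stopped_walk_mono:
  assumes "1 \<le> n"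
  shows "(\<integral>\<omega>. first_step_up \<omega> * stopped_walk n \<omega> \<partial>M)
    \<le> (\<integral>\<omega>. first_step_up \<omega> * stopped_walk (Suc n) \<omega> \<partial>M)"
proof -
  have "first_step_up \<omega> * stopped_walk (Suc n) \<omega>
      = first_step_up \<omega> * stopped_walk n \<omega> + alive n \<omega> * step (Suc n) \<omega>" for \<omega>
    by (simp add: stopped_walk_Suc alive_def algebra_simps)
  then show ?thesis
    using integrable_first_step_up_stopped_walk integrable_alive_step[OF assms]
      expectation_alive_step_nonneg[OF assms]
    by simp
qed

lemma expectation_stopped_walk_one:
  "(\<integral>\<omega>. first_step_up \<omega> * stopped_walk 1 \<omega> \<partial>M) = (\<integral>\<omega>. first_step_up \<omega> \<partial>M)"
  by (rule Bochner_Integration.integral_cong)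
    (auto simp: first_step_up_def stopped_walk_def avoids_zero_def walk_def)

lemma expectation_first_step_up_le:
  "1 \<le> n \<Longrightarrow> (\<integral>\<omega>. first_step_up \<omega> \<partial>M) \<le> (\<integral>\<omega>. first_step_up \<omega> * stopped_walk n \<omega> \<partial>M)"
proof (induction n rule: dec_induct)
  case base
  then show ?case using expectation_stopped_walk_one by simp
next
  case (step n)
  then show ?case using expectation_stopped_walk_mono[of n] by linarith
qed

lemma expectation_stopped_walk_le:
  "(\<integral>\<omega>. first_step_up \<omega> * stopped_walk n \<omega> \<partial>M) \<le> n * prob {\<omega> \<in> space M. avoids_zero n \<omega>}"
proof -
  have "(\<integral>\<omega>. first_step_up \<omega> * stopped_walk n \<omega> \<partial>M) \<le> (\<integral>\<omega>. real n * of_bool (avoids_zero n \<omega>) \<partial>M)"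
  proof (rule integral_mono)
    show "integrable M (\<lambda>\<omega>. first_step_up \<omega> * stopped_walk n \<omega>)"
      by (rule integrable_first_step_up_stopped_walk)
    show "integrable M (\<lambda>\<omega>. real n * of_bool (avoids_zero n \<omega>))"
      by (rule integrable_bounded_determined[OF depends_only_on_comp[OF avoids_zero_determined], where B=n])
        simp
    show "first_step_up \<omega> * stopped_walk n \<omega> \<le> real n * of_bool (avoids_zero n \<omega>)" for \<omega>
      using abs_walk_le[of n \<omega>] by (auto simp: first_step_up_def stopped_walk_def)
  qed
  then show ?thesis by (simp add: integral_of_bool_eq_prob)
qed

lemma prob_avoids_zero_ge:
  "1 \<le> n \<Longrightarrow> (\<integral>\<omega>. first_step_up \<omega> \<partial>M) / n \<le> prob {\<omega> \<in> space M. avoids_zero n \<omega>}"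
  using expectation_first_step_up_le[of n] expectation_stopped_walk_le[of n]
  by (simp add: divide_le_eq mult.commute)

end

lemma rencontre_time_gt:
  assumes "2 \<le> d" and "\<And>k. k \<in> {1..n} \<Longrightarrow> partial_count X 0 k \<omega> \<noteq> partial_count X 1 k \<omega>"
  shows "enat n < rencontre_time d X \<omega>"
proof (cases "\<exists>m\<ge>1. \<forall>j<d. \<forall>l<d. partial_count X j m \<omega> = partial_count X l m \<omega>")
  case True
  let ?meet = "\<lambda>m. m \<ge> 1 \<and> (\<forall>j<d. \<forall>l<d. partial_count X j m \<omega> = partial_count X l m \<omega>)"
  define m where "m = (LEAST m. ?meet m)"
  have "?meet m" unfolding m_def using True by (rule LeastI_ex)
  moreover have "0 < d" "1 < d" using assms(1) by simp_all
  ultimately have "1 \<le> m" "partial_count X 0 m \<omega> = partial_count X 1 m \<omega>" by blast+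
  then have "n < m" using assms(2) by (meson atLeastAtMost_iff not_less)
  then show ?thesis using True by (simp add: rencontre_time_def m_def)
next
  case False
  then have "rencontre_time d X \<omega> = \<infinity>" unfolding rencontre_time_def by (rule if_not_P)
  then show ?thesis by simp
qed

theorem theorem10:
  fixes M :: "'a measure" and d :: nat and p :: "nat \<Rightarrow> real"
    and X :: "nat \<Rightarrow> nat \<Rightarrow> 'a \<Rightarrow> bool"
  assumes "prob_space M"
    and "d \<ge> 3"
    and "\<forall>j<d. 0 < p j \<and> p j < 1"
    and "prob_space.indep_vars M (\<lambda>_. count_space UNIV) (\<lambda>(j, k). X j k) ({..<d} \<times> {1..})"
    and "\<forall>j<d. \<forall>k\<ge>1. measure M {\<omega> \<in> space M. X j k \<omega>} = p j"
  shows "(\<integral>\<^sup>+ \<omega>. ennreal_of_enat (rencontre_time d X \<omega>) \<partial>M) = \<infinity>"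
proof -
  interpret prob_space M by fact
  interpret bernoulli_pair M X p
  proof
    show "indep_vars (\<lambda>_. count_space UNIV) (\<lambda>(j, k). X j k) ({..<2} \<times> {1..})"
      by (rule indep_vars_subset[OF assms(4)]) (use assms(2) in auto)
  qed (use assms(2,3,5) in auto)
  show ?thesis
  proof (rule nn_integral_eq_infinity_if_harmonic_tail)
    show "0 < (\<integral>\<omega>. first_step_up \<omega> \<partial>M)" by (rule expectation_first_step_up_pos)
    show "{\<omega> \<in> space M. avoids_zero n \<omega>} \<in> events" for n by (rule avoids_zero_event)
    show "(\<integral>\<omega>. first_step_up \<omega> \<partial>M) / n \<le> prob {\<omega> \<in> space M. avoids_zero n \<omega>}" if "1 \<le> n" for n
      using that by (rule prob_avoids_zero_ge)
    show "enat n < rencontre_time d X \<omega>" if "\<omega> \<in> {\<omega> \<in> space M. avoids_zero n \<omega>}" for n \<omega>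
      using that assms(2) by (intro rencontre_time_gt) (auto simp: avoids_zero_def walk_eq_0_iff)
  qed
qed

end
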